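(* Let ${\bm{x}}_i^m\in\mathbb{R}^d$ ($m\in[M]$, $i\in[n]$) satisfy $\|{\bm{x}}_i^m\|\le1$ and be linearly separable. Let $\ell(z)=\log(1+e^{-z})$, $F_m({\bm{w}})=\frac1n\sum_i\ell(\langle{\bm{w}},{\bm{x}}_i^m\rangle)$, $F=\frac1M\sum_mF_m$. Run Local GD with any ${\bm{w}}_0$, $\eta>0$, $K\in\mathbb{N}$: ${\bm{w}}_{r,0}^m={\bm{w}}_r$, ${\bm{w}}_{r,k+1}^m={\bm{w}}_{r,k}^m-\eta\nabla F_m({\bm{w}}_{r,k}^m)$ ($k=0,\dots,K-1$), ${\bm{w}}_{r+1}=\frac1M\sum_m{\bm{w}}_{r,K}^m$. If $F({\bm{w}}_r)\le1/(\eta KM)$ for some $r\ge0$, then $\|{\bm{w}}_{r,k}^m-{\bm{w}}_r\|\le1$ for every $m\in[M]$ and $k\in[K]$.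
   Context: Linear separability means there is ${\bm{w}}$ with $\langle{\bm{w}},{\bm{x}}_i^m\rangle>0$ for all $m,i$ (labels absorbed into data). $[K]=\{1,\dots,K\}$. *)

theory Defs
  imports "HOL-Analysis.Analysis"
begin

definition logloss :: "real \<Rightarrow> real" where
  "logloss z = ln (1 + exp (- z))"

definition Floc :: "nat \<Rightarrow> (nat \<Rightarrow> nat \<Rightarrow> 'a::real_inner) \<Rightarrow> nat \<Rightarrow> 'a \<Rightarrow> real" where
  "Floc n x m w = (1 / real n) * (\<Sum>i=1..n. logloss (inner w (x m i)))"

definition Fglob :: "nat \<Rightarrow> nat \<Rightarrow> (nat \<Rightarrow> nat \<Rightarrow> 'a::real_inner) \<Rightarrow> 'a \<Rightarrow> real" where
  "Fglob M n x w = (1 / real M) * (\<Sum>m=1..M. Floc n x m w)"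

definition grad :: "('a::real_inner \<Rightarrow> real) \<Rightarrow> 'a \<Rightarrow> 'a" where
  "grad f w = (THE D. GDERIV f w :> D)"

fun local_iter :: "nat \<Rightarrow> (nat \<Rightarrow> nat \<Rightarrow> 'a::real_inner) \<Rightarrow> real \<Rightarrow> nat \<Rightarrow> 'a \<Rightarrow> nat \<Rightarrow> 'a" where
  "local_iter n x eta m w 0 = w"
| "local_iter n x eta m w (Suc k) =
     local_iter n x eta m w k - eta *\<^sub>R grad (Floc n x m) (local_iter n x eta m w k)"

fun round_iter :: "nat \<Rightarrow> nat \<Rightarrow> (nat \<Rightarrow> nat \<Rightarrow> 'a::real_inner) \<Rightarrow> real \<Rightarrow> nat \<Rightarrow> 'a \<Rightarrow> nat \<Rightarrow> 'a" where
  "round_iter M n x eta K w0 0 = w0"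
| "round_iter M n x eta K w0 (Suc r) =
     (1 / real M) *\<^sub>R (\<Sum>m=1..M. local_iter n x eta m (round_iter M n x eta K w0 r) K)"

end

theory Submission
  imports Defs
begin

text \<open>The logistic loss is self-bounded: \<open>|l'| \<le> l\<close> and, for \<open>|d| \<le> 1\<close>,
  \<open>l(z + d) \<le> l(z) + l'(z) d + d\<^sup>2 l(z)\<close>. Summed over data of norm at most 1 this gives
  \<open>\<parallel>\<nabla>F\<^sub>m(v)\<parallel> \<le> F\<^sub>m(v)\<close> and a quadratic upper model whose curvature is \<open>F\<^sub>m(v)\<close> itself, so a
  gradient step with \<open>\<eta> F\<^sub>m(v) \<le> 1\<close> does not increase \<open>F\<^sub>m\<close>. Hence along the local run every
  step has length at most \<open>\<eta> F\<^sub>m(w\<^sub>r) \<le> \<eta> M F(w\<^sub>r) \<le> 1/K\<close>, and \<open>k \<le> K\<close> steps move at most 1.\<close>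

definition logloss' :: "real \<Rightarrow> real" where
  "logloss' z = - 1 / (1 + exp z)"

lemma logloss_has_real_derivative: "(logloss has_real_derivative logloss' z) (at z)"
proof -
  have "((\<lambda>z. ln (1 + exp (- z))) has_real_derivative 1 / (1 + exp (- z)) * (exp (- z) * - 1)) (at z)"
    by (auto intro!: derivative_eq_intros simp: add_pos_pos)
  moreover have "1 / (1 + exp (- z)) * (exp (- z) * - 1) = logloss' z"
    by (simp add: logloss'_def exp_minus field_simps)
  ultimately show ?thesis
    unfolding logloss_def [abs_def] by simp
qed

lemma logloss'_eq: "logloss' z = - exp (- z) / (1 + exp (- z))"
proof -
  have "1 + exp z > 0"
    by (simp add: add_pos_pos)
  then show ?thesis
    by (simp add: logloss'_def exp_minus field_simps)
qed

lemma logloss_nonneg: "0 \<le> logloss z"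
  unfolding logloss_def by simp

lemma logloss'_nonpos: "logloss' z \<le> 0"
  unfolding logloss'_def by (simp add: add_pos_pos)

lemma abs_logloss'_le_logloss: "\<bar>logloss' z\<bar> \<le> logloss z"
proof -
  define u where "u = exp (- z)"
  have u: "u > 0"
    unfolding u_def by simp
  have "\<bar>logloss' z\<bar> = u / (1 + u)"
    using u by (simp add: logloss'_eq u_def)
  also have "\<dots> = 1 - 1 / (1 + u)"
    using u by (simp add: field_simps)
  also have "\<dots> \<le> ln (1 + u)"
    using ln_le_minus_one [of "1 / (1 + u)"] u by (simp add: ln_div)
  finally show ?thesis
    unfolding logloss_def u_def .
qed

lemma exp_le_one_plus_self_plus_square:
  fixes y :: real
  assumes "\<bar>y\<bar> \<le> 1"
  shows "exp y \<le> 1 + y + y\<^sup>2"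
proof (cases "y \<ge> 0")
  case True
  then show ?thesis
    using assms exp_bound by simp
next
  case False
  have "1 - y \<le> exp (- y)"
    using exp_ge_add_one_self [of "- y"] by simp
  then have "exp y \<le> 1 / (1 - y)"
    using False by (simp add: exp_minus field_simps)
  also have "\<dots> \<le> 1 + y + y\<^sup>2"
  proof -
    have "(1 + y + y\<^sup>2) * (1 - y) = 1 - y * y\<^sup>2"
      by (simp add: algebra_simps power2_eq_square)
    moreover have "y * y\<^sup>2 \<le> 0"
      using False by (intro mult_nonpos_nonneg) auto
    ultimately show ?thesis
      using False by (simp add: divide_le_eq)
  qed
  finally show ?thesis .
qed

lemma logloss_add_le:
  assumes "\<bar>d\<bar> \<le> 1"
  shows "logloss (z + d) \<le> logloss z + logloss' z * d + d\<^sup>2 * logloss z"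
proof -
  define u t where "u = exp (- z)" and "t = exp (- d)"
  have u: "u > 0" and t: "t > 0"
    unfolding u_def t_def by simp_all
  have "logloss (z + d) - logloss z = ln (1 + u * t) - ln (1 + u)"
    by (simp add: logloss_def u_def t_def exp_add [symmetric])
  also have "\<dots> \<le> (u * t - u) / (1 + u)"
    using ln_diff_le [of "1 + u * t" "1 + u"] u t by (simp add: add_pos_pos)
  also have "\<dots> = - logloss' z * (t - 1)"
    using u by (simp add: logloss'_eq u_def field_simps)
  also have "\<dots> \<le> - logloss' z * (- d + d\<^sup>2)"
    using exp_le_one_plus_self_plus_square [of "- d"] assms logloss'_nonpos [of z]
    by (intro mult_left_mono) (auto simp: t_def)
  also have "\<dots> \<le> logloss' z * d + d\<^sup>2 * logloss z"
    using abs_logloss'_le_logloss [of z] logloss'_nonpos [of z]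
      mult_right_mono [of "- logloss' z" "logloss z" "d\<^sup>2"]
    by (simp add: algebra_simps)
  finally show ?thesis
    by simp
qed

lemma grad_eqI:
  assumes "GDERIV f v :> D"
  shows "grad f v = D"
  unfolding grad_def
proof (rule the_equality)
  fix D'
  assume "GDERIV f v :> D'"
  then have "(\<lambda>h. inner h D') = (\<lambda>h. inner h D)"
    using assms unfolding gderiv_def by (rule has_derivative_unique)
  then show "D' = D"
    by (metis vector_eq_ldot)
qed (fact assms)

lemma grad_Floc:
  "grad (Floc n x m) v = (1 / real n) *\<^sub>R (\<Sum>i=1..n. logloss' (inner v (x m i)) *\<^sub>R x m i)"
proof (rule grad_eqI)
  have "GDERIV (\<lambda>w. inner w (x m i)) v :> x m i" for i
    unfolding gderiv_def
    by (simp add: bounded_linear.has_derivative [OF bounded_linear_inner_left] inner_commute)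
  then have "((\<lambda>w. logloss (inner w (x m i)))
      has_derivative (\<lambda>h. inner h (logloss' (inner v (x m i)) *\<^sub>R x m i))) (at v)" for i
    using GDERIV_DERIV_compose [OF _ logloss_has_real_derivative] unfolding gderiv_def by blast
  then have "((\<lambda>w. 1 / real n * (\<Sum>i=1..n. logloss (inner w (x m i)))) has_derivative
      (\<lambda>h. 1 / real n * (\<Sum>i=1..n. inner h (logloss' (inner v (x m i)) *\<^sub>R x m i)))) (at v)"
    by (intro has_derivative_mult_right has_derivative_sum)
  then show "GDERIV (Floc n x m) v :>
      (1 / real n) *\<^sub>R (\<Sum>i=1..n. logloss' (inner v (x m i)) *\<^sub>R x m i)"
    unfolding gderiv_def Floc_def [abs_def] by (simp add: inner_sum_right)
qed

lemma Floc_nonneg: "0 \<le> Floc n x m v"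
  unfolding Floc_def by (intro mult_nonneg_nonneg sum_nonneg logloss_nonneg) auto

lemma norm_grad_Floc_le:
  assumes "\<And>i. i \<in> {1..n} \<Longrightarrow> norm (x m i) \<le> 1"
  shows "norm (grad (Floc n x m) v) \<le> Floc n x m v"
proof -
  have "norm (\<Sum>i=1..n. logloss' (inner v (x m i)) *\<^sub>R x m i)
      \<le> (\<Sum>i=1..n. \<bar>logloss' (inner v (x m i))\<bar> * norm (x m i))"
    by (rule norm_sum [THEN order_trans]) simp
  also have "\<dots> \<le> (\<Sum>i=1..n. logloss (inner v (x m i)))"
    using assms abs_logloss'_le_logloss
    by (intro sum_mono) (meson abs_ge_zero mult_left_le order_trans)
  finally show ?thesis
    unfolding grad_Floc Floc_def by (simp add: divide_right_mono)
qed


lemma Floc_add_le: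
  assumes "\<And>i. i \<in> {1..n} \<Longrightarrow> norm (x m i) \<le> 1" and "norm h \<le> 1"
  shows "Floc n x m (v + h)
    \<le> Floc n x m v + inner (grad (Floc n x m) v) h + (norm h)\<^sup>2 * Floc n x m v"
proof -
  let ?z = "\<lambda>i. inner v (x m i)" and ?d = "\<lambda>i. inner h (x m i)"
  have d: "\<bar>?d i\<bar> \<le> norm h" if "i \<in> {1..n}" for i
    using Cauchy_Schwarz_ineq2 [of h "x m i"] assms(1) [OF that] norm_ge_zero [of h]
    by (meson mult_left_le order_trans)
  have "(\<Sum>i=1..n. logloss (inner (v + h) (x m i)))
      \<le> (\<Sum>i=1..n. logloss (?z i) + logloss' (?z i) * ?d i + (norm h)\<^sup>2 * logloss (?z i))"
  proof (rule sum_mono)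
    fix i
    assume i: "i \<in> {1..n}"
    have "(?d i)\<^sup>2 \<le> (norm h)\<^sup>2"
      using d [OF i] by (metis abs_ge_zero power2_abs power_mono)
    then have "(?d i)\<^sup>2 * logloss (?z i) \<le> (norm h)\<^sup>2 * logloss (?z i)"
      by (rule mult_right_mono) (rule logloss_nonneg)
    then show "logloss (inner (v + h) (x m i))
        \<le> logloss (?z i) + logloss' (?z i) * ?d i + (norm h)\<^sup>2 * logloss (?z i)"
      using logloss_add_le [of "?d i" "?z i"] d [OF i] assms(2) by (simp add: inner_add_left)
  qed
  also have "\<dots> = (\<Sum>i=1..n. logloss (?z i))
      + inner h (\<Sum>i=1..n. logloss' (?z i) *\<^sub>R x m i) + (norm h)\<^sup>2 * (\<Sum>i=1..n. logloss (?z i))"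
    by (simp add: sum.distrib sum_distrib_left inner_sum_right)
  finally have "Floc n x m (v + h) \<le> 1 / real n * (\<dots>)"
    unfolding Floc_def by (intro mult_left_mono) auto
  then show ?thesis
    unfolding Floc_def grad_Floc by (simp add: distrib_left inner_commute)
qed

lemma gradient_step_descent:
  fixes f :: "'a::real_inner \<Rightarrow> real"
  assumes "norm g \<le> f v"
    and "\<And>h. norm h \<le> 1 \<Longrightarrow> f (v + h) \<le> f v + inner g h + (norm h)\<^sup>2 * f v"
    and "0 \<le> eta" and "eta * f v \<le> 1"
  shows "f (v - eta *\<^sub>R g) \<le> f v"
proof -
  have "norm (- (eta *\<^sub>R g)) \<le> 1"
    using assms(1,3,4) mult_left_mono [of "norm g" "f v" eta] by simp
  then have "f (v - eta *\<^sub>R g) \<le> f v - eta * (norm g)\<^sup>2 + (eta * norm g)\<^sup>2 * f v"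
    using assms(2) [of "- (eta *\<^sub>R g)"] assms(3) by (simp add: power2_norm_eq_inner)
  also have "\<dots> = f v - eta * (norm g)\<^sup>2 * (1 - eta * f v)"
    by (simp add: algebra_simps power2_eq_square)
  also have "\<dots> \<le> f v"
    using assms(3,4) by simp
  finally show ?thesis .
qed

lemma Floc_local_iter_le:
  assumes "\<And>i. i \<in> {1..n} \<Longrightarrow> norm (x m i) \<le> 1" and "0 \<le> eta"
    and "eta * Floc n x m w \<le> 1"
  shows "Floc n x m (local_iter n x eta m w k) \<le> Floc n x m w"
proof (induction k)
  case (Suc k)
  let ?v = "local_iter n x eta m w k"
  have "eta * Floc n x m ?v \<le> 1"
    using Suc.IH assms(2,3) mult_left_mono order_trans by blast
  then have "Floc n x m (?v - eta *\<^sub>R grad (Floc n x m) ?v) \<le> Floc n x m ?v"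
    using assms(1,2) by (intro gradient_step_descent norm_grad_Floc_le Floc_add_le)
  with Suc.IH show ?case
    by simp
qed simp

lemma norm_local_iter_diff_le:
  assumes "\<And>i. i \<in> {1..n} \<Longrightarrow> norm (x m i) \<le> 1" and "0 \<le> eta"
    and "eta * Floc n x m w \<le> 1"
  shows "norm (local_iter n x eta m w k - w) \<le> real k * eta * Floc n x m w"
proof (induction k)
  case (Suc k)
  let ?v = "local_iter n x eta m w k"
  have "eta * norm (grad (Floc n x m) ?v) \<le> eta * Floc n x m w"
    using norm_grad_Floc_le [of n x m ?v, OF assms(1)] Floc_local_iter_le [OF assms, of k]
    by (intro mult_left_mono [OF _ assms(2)]) (rule order_trans)
  moreover have "norm (local_iter n x eta m w (Suc k) - w)
      \<le> norm (?v - w) + eta * norm (grad (Floc n x m) ?v)"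
    using norm_triangle_ineq4 [of "?v - w" "eta *\<^sub>R grad (Floc n x m) ?v"] assms(2)
    by (simp add: algebra_simps)
  ultimately show ?case
    using Suc.IH by (simp add: algebra_simps)
qed simp

lemma Floc_le_Fglob:
  assumes "m \<in> {1..M}"
  shows "Floc n x m w \<le> real M * Fglob M n x w"
proof -
  have "Floc n x m w \<le> (\<Sum>j=1..M. Floc n x j w)"
    using assms by (intro member_le_sum Floc_nonneg) auto
  then show ?thesis
    using assms by (simp add: Fglob_def)
qed

theorem lemma4p7:
  fixes x :: "nat \<Rightarrow> nat \<Rightarrow> 'a::euclidean_space"
    and M n K r :: nat and eta :: real and w0 :: 'a
  assumes "M \<ge> 1" and "n \<ge> 1"
    and "\<And>m i. m \<in> {1..M} \<Longrightarrow> i \<in> {1..n} \<Longrightarrow> norm (x m i) \<le> 1"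
    and "\<exists>w. \<forall>m\<in>{1..M}. \<forall>i\<in>{1..n}. inner w (x m i) > 0"
    and "eta > 0"
    and "Fglob M n x (round_iter M n x eta K w0 r) \<le> 1 / (eta * real K * real M)"
  shows "\<forall>m\<in>{1..M}. \<forall>k\<in>{1..K}.
           norm (local_iter n x eta m (round_iter M n x eta K w0 r) k - round_iter M n x eta K w0 r) \<le> 1"
proof (intro ballI)
  fix m k
  assume m: "m \<in> {1..M}" and k: "k \<in> {1..K}"
  define w where "w = round_iter M n x eta K w0 r"
  have "Floc n x m w \<le> real M * Fglob M n x w"
    using m by (rule Floc_le_Fglob)
  also have "\<dots> \<le> real M * (1 / (eta * real K * real M))"
    using assms(6) unfolding w_def by (intro mult_left_mono) auto
  also have "\<dots> = 1 / (eta * real K)"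
    using assms(1) by simp
  finally have "Floc n x m w * (eta * real K) \<le> 1"
    using assms(5) k by (simp add: pos_le_divide_eq)
  then have budget: "real K * eta * Floc n x m w \<le> 1"
    by (simp add: ac_simps)
  have "1 * (eta * Floc n x m w) \<le> real K * (eta * Floc n x m w)"
    using k assms(5) Floc_nonneg [of n x m w] by (intro mult_right_mono) auto
  then have step: "eta * Floc n x m w \<le> 1"
    using budget by (simp add: ac_simps)
  have "norm (local_iter n x eta m w k - w) \<le> real k * eta * Floc n x m w"
    using assms(3) [OF m] assms(5) step by (intro norm_local_iter_diff_le) auto
  also have "\<dots> \<le> real K * eta * Floc n x m w"
    using k assms(5) Floc_nonneg [of n x m w] by (intro mult_right_mono) auto
  finally have "norm (local_iter n x eta m w k - w) \<le> 1"
    using budget by simp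
  then show "norm (local_iter n x eta m (round_iter M n x eta K w0 r) k - round_iter M n x eta K w0 r) \<le> 1"
    by (simp add: w_def)
qed

end
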